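(* Consider the controlled SI optimal control problem described in the context, with one control per node ($M=N$) and given (fixed) initial conditions. Let $(\boldsymbol i^*(t), \boldsymbol\lambda^*(t), \boldsymbol u^*(t))$, $t\in[0,T]$, be an optimal state trajectory, its associated adjoint trajectory, and optimal controls satisfying the Pontryagin Maximum Principle conditions listed in the context. Then each optimal control $u_j^*(t)$, $1\le j\le N$, is a non-increasing function of $t$ on $[0,T]$.
   Context: Let $N\geq 1$, and let $\boldsymbol A=(A_{jk})$ be an $N\times N$ symmetric matrix with entries in $\{0,1\}$ (adjacency matrix of an undirected, unweighted network on nodes $1,\dots,N$). Fix $\beta>0$, a horizon $T>0$, and initial values $x_{0j}\in[0,1]$. Each node $j$ has its own control $u_j(t)$. The state $i_j(t)\in[0,1]$ (probability node $j$ is informed), with $s_j(t)=1-i_j(t)$, evolves by $\dot i_j(t)=\beta s_j(t)\sum_{k=1}^N A_{jk}i_k(t)+u_j(t)s_j(t)$, $i_j(0)=x_{0j}$, $1\le j\le N$. The objective to be maximized is $J=\frac1N\sum_{j=1}^N i_j(T)-\sum_{j=1}^N\int_0^T g_j(u_j(t))\,dt$, where each $g_j:\mathbb R\to\mathbb R$ is twice differentiable, strictly convex, even, increasing on $[0,\infty)$, and satisfies $g_j(0)=0$. The optimal controls are nonnegative: $u_j^*(t)\ge 0$. The Hamiltonian is $H(\boldsymbol i,\boldsymbol\lambda,\boldsymbol u)=-\sum_{j=1}^N g_j(u_j)+\sum_{l=1}^N\lambda_l\big(\beta s_l\sum_{k=1}^N A_{lk}i_k+u_l s_l\big)$ with $s_l=1-i_l$.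 The Pontryagin conditions are: $\boldsymbol i^*$ solves the state equations above; the adjoint variables satisfy $\dot\lambda_j^*(t)=-\beta\sum_{l=1}^N\lambda_l^*(t)s_l^*(t)A_{lj}+\beta\lambda_j^*(t)\sum_{k=1}^N A_{jk}i_k^*(t)+\lambda_j^*(t)u_j^*(t)$ with $\lambda_j^*(T)=1/N$; and for each $t$, $\boldsymbol u^*(t)$ maximizes $H(\boldsymbol i^*(t),\boldsymbol\lambda^*(t),\cdot)$, which gives $g_j'(u_j^*(t))=\lambda_j^*(t)s_j^*(t)$ for each $j$. *)

theory Defs
  imports "HOL-Analysis.Analysis"
begin

definition strictly_convex_on :: "real set \<Rightarrow> (real \<Rightarrow> real) \<Rightarrow> bool" where
  "strictly_convex_on S f \<longleftrightarrow>
     (\<forall>x\<in>S. \<forall>y\<in>S. \<forall>a::real. x \<noteq> y \<and> 0 < a \<and> a < 1 \<longrightarrow>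
        f (a * x + (1 - a) * y) < a * f x + (1 - a) * f y)"

definition hamiltonian ::
  "nat \<Rightarrow> (nat \<Rightarrow> nat \<Rightarrow> real) \<Rightarrow> real \<Rightarrow> (nat \<Rightarrow> real \<Rightarrow> real)
   \<Rightarrow> (nat \<Rightarrow> real) \<Rightarrow> (nat \<Rightarrow> real) \<Rightarrow> (nat \<Rightarrow> real) \<Rightarrow> real" where
  "hamiltonian N A \<beta> g i lam u =
     - (\<Sum>j=1..N. g j (u j))
     + (\<Sum>l=1..N. lam l * (\<beta> * (1 - i l) * (\<Sum>k=1..N. A l k * i k) + u l * (1 - i l)))"

end

theory Submission
  imports Defs
begin

text \<open>
  Along an optimal trajectory the switching function \<open>\<phi>\<^sub>j = \<lambda>\<^sub>j s\<^sub>j\<close> satisfies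
  \<open>\<phi>\<^sub>j' = -\<beta> s\<^sub>j \<Sum>\<^sub>l \<phi>\<^sub>l A\<^sub>l\<^sub>j\<close>: in the product rule the terms carrying the
  infection pressure and the control cancel. Since \<open>g\<^sub>l'\<close> is strictly increasing and vanishes
  at \<open>0\<close>, the stationarity condition \<open>g\<^sub>l'(u\<^sub>l) = \<phi>\<^sub>l\<close> with \<open>u\<^sub>l \<ge> 0\<close> gives \<open>\<phi>\<^sub>l \<ge> 0\<close>, so
  \<open>\<phi>\<^sub>j\<close> is non-increasing, and hence so is \<open>u\<^sub>j = (g\<^sub>j')\<^sup>-\<^sup>1(\<phi>\<^sub>j)\<close>.
\<close>

lemma strictly_convex_on_imp_convex_on:
  assumes "strictly_convex_on S f" and "convex S"
  shows "convex_on S f"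
proof (rule convex_onI)
  fix t x y :: real
  assume t: "0 < t" "t < 1" and xy: "x \<in> S" "y \<in> S"
  show "f ((1 - t) *\<^sub>R x + t *\<^sub>R y) \<le> (1 - t) * f x + t * f y"
  proof (cases "x = y")
    case True
    then show ?thesis by (simp add: algebra_simps)
  next
    case False
    moreover have "0 < 1 - t" "1 - t < 1" using t by auto
    ultimately have "f ((1 - t) * x + (1 - (1 - t)) * y) < (1 - t) * f x + (1 - (1 - t)) * f y"
      using assms(1) xy unfolding strictly_convex_on_def by blast
    then show ?thesis by simp
  qed
qed (fact assms(2))

lemma strictly_convex_on_UNIV_deriv_strict_mono:
  assumes conv: "strictly_convex_on UNIV f" and diff: "\<And>x. f differentiable (at x)"
  shows "strict_mono (deriv f)"
proof (rule strict_monoI)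
  fix a b :: real
  assume "a < b"
  have tangent: "f x - f c \<ge> deriv f c * (x - c)" for x c
    using convex_on_imp_above_tangent[of UNIV f c x "deriv f c"]
      strictly_convex_on_imp_convex_on[OF conv] diff
    by (simp add: DERIV_deriv_iff_real_differentiable)
  define m where "m = (a + b) / 2"
  have "a \<noteq> b" "(0::real) < 1/2" "(1/2::real) < 1" using \<open>a < b\<close> by auto
  then have "f ((1/2) * a + (1 - 1/2) * b) < (1/2) * f a + (1 - 1/2) * f b"
    using conv unfolding strictly_convex_on_def by blast
  then have "f m < (f a + f b) / 2"
    by (simp add: m_def field_simps)
  with tangent[where x = m and c = a] tangent[where x = m and c = b]
  have "deriv f a * ((b - a) / 2) < deriv f b * ((b - a) / 2)"
    by (simp add: m_def field_simps)
  with \<open>a < b\<close> show "deriv f a < deriv f b" by simp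
qed

lemma even_function_deriv_zero:
  fixes f :: "real \<Rightarrow> real"
  assumes "f differentiable (at 0)" and even: "\<And>x. f (- x) = f x"
  shows "deriv f 0 = 0"
proof -
  have D: "(f has_real_derivative deriv f 0) (at 0)"
    using assms(1) by (simp add: DERIV_deriv_iff_real_differentiable)
  then have "((\<lambda>x. f (- x)) has_real_derivative - deriv f 0) (at 0)"
    using DERIV_mirror[where f = f and x = 0 and y = "deriv f 0", unfolded minus_zero] by blast
  moreover have "(\<lambda>x. f (- x)) = f" using even by auto
  ultimately have "(f has_real_derivative - deriv f 0) (at 0)" by simp
  with D have "deriv f 0 = - deriv f 0" using DERIV_unique by blast
  then show ?thesis by simp
qed

lemma strictly_convex_even_deriv_nonneg:
  assumes "strictly_convex_on UNIV f" and "\<And>x. f differentiable (at x)"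
    and "\<And>x. f (- x) = f x" and "0 \<le> u"
  shows "0 \<le> deriv f u"
  using strict_mono_less_eq[OF strictly_convex_on_UNIV_deriv_strict_mono[OF assms(1,2)]]
    even_function_deriv_zero[of f] assms(2-4)
  by metis

lemma has_real_derivative_nonpos_imp_antimono:
  fixes f f' :: "real \<Rightarrow> real"
  assumes der: "\<And>t. t \<in> {a..b} \<Longrightarrow> (f has_real_derivative f' t) (at t within {a..b})"
    and nonpos: "\<And>t. t \<in> {a..b} \<Longrightarrow> f' t \<le> 0"
    and "x \<in> {a..b}" "y \<in> {a..b}" "x \<le> y"
  shows "f y \<le> f x"
proof -
  have sub: "{x..y} \<subseteq> {a..b}" using assms(3,4) by auto
  have "\<exists>z\<in>{x..y}. f y - f x = (\<lambda>h. f' z * h) (y - x)"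
  proof (rule mvt_very_simple[OF \<open>x \<le> y\<close>])
    fix z assume "x \<le> z" "z \<le> y"
    then have "z \<in> {a..b}" using assms(3,4) by auto
    from has_derivative_subset[OF der[OF this, unfolded has_field_derivative_def] sub]
    show "(f has_derivative (\<lambda>h. f' z * h)) (at z within {x..y})" .
  qed
  then obtain z where "z \<in> {x..y}" "f y - f x = (y - x) * f' z" by auto
  moreover from \<open>z \<in> {x..y}\<close> sub have "f' z \<le> 0" using nonpos by auto
  then have "(y - x) * f' z \<le> 0" using \<open>x \<le> y\<close> by (simp add: mult_nonneg_nonpos)
  ultimately show ?thesis by simp
qed

text \<open>
  \<open>S\<close> stands for the infection pressure \<open>\<Sum>\<^sub>k A\<^sub>j\<^sub>k i\<^sub>k\<close>, \<open>v\<close> for the control and \<open>P\<close> for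
  \<open>\<Sum>\<^sub>l \<lambda>\<^sub>l s\<^sub>l A\<^sub>l\<^sub>j\<close>; the \<open>S\<close>- and \<open>v\<close>-terms of the two equations cancel.
\<close>
lemma adjoint_times_susceptible_derivative:
  fixes i lam :: "real \<Rightarrow> real"
  assumes "(i has_real_derivative \<beta> * (1 - i t) * S + v * (1 - i t)) (at t within X)"
    and "(lam has_real_derivative - \<beta> * P + \<beta> * lam t * S + lam t * v) (at t within X)"
  shows "((\<lambda>s. lam s * (1 - i s)) has_real_derivative - \<beta> * (1 - i t) * P) (at t within X)"
proof -
  have "((\<lambda>s. lam s * (1 - i s)) has_real_derivative
          (- \<beta> * P + \<beta> * lam t * S + lam t * v) * (1 - i t)
          + (0 - (\<beta> * (1 - i t) * S + v * (1 - i t))) * lam t) (at t within X)"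
    by (rule DERIV_mult[OF assms(2) DERIV_diff[OF DERIV_const assms(1)]])
  moreover have "(- \<beta> * P + \<beta> * lam t * S + lam t * v) * (1 - i t)
          + (0 - (\<beta> * (1 - i t) * S + v * (1 - i t))) * lam t = - \<beta> * (1 - i t) * P"
    by (simp add: algebra_simps)
  ultimately show ?thesis by simp
qed

theorem theorem1:
  fixes N :: nat and A :: "nat \<Rightarrow> nat \<Rightarrow> real" and \<beta> T :: real
    and x0 :: "nat \<Rightarrow> real" and g :: "nat \<Rightarrow> real \<Rightarrow> real"
    and i lam u :: "nat \<Rightarrow> real \<Rightarrow> real"
  assumes N_pos: "N \<ge> 1"
    and A_01: "\<forall>j\<in>{1..N}. \<forall>k\<in>{1..N}. A j k = 0 \<or> A j k = 1"
    and A_sym: "\<forall>j\<in>{1..N}. \<forall>k\<in>{1..N}. A j k = A k j"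
    and beta_pos: "\<beta> > 0" and T_pos: "T > 0"
    and x0_range: "\<forall>j\<in>{1..N}. 0 \<le> x0 j \<and> x0 j \<le> 1"
    and g_diff: "\<forall>j\<in>{1..N}. \<forall>x. g j differentiable (at x)"
    and g_diff2: "\<forall>j\<in>{1..N}. \<forall>x. deriv (g j) differentiable (at x)"
    and g_conv: "\<forall>j\<in>{1..N}. strictly_convex_on UNIV (g j)"
    and g_even: "\<forall>j\<in>{1..N}. \<forall>x. g j (- x) = g j x"
    and g_mono: "\<forall>j\<in>{1..N}. mono_on {0..} (g j)"
    and g_zero: "\<forall>j\<in>{1..N}. g j 0 = 0"
    \<comment> \<open>state equations\<close>
    and i_range: "\<forall>j\<in>{1..N}. \<forall>t\<in>{0..T}. 0 \<le> i j t \<and> i j t \<le> 1"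
    and i_init: "\<forall>j\<in>{1..N}. i j 0 = x0 j"
    and i_ode: "\<forall>j\<in>{1..N}. \<forall>t\<in>{0..T}.
       (i j has_real_derivative
          (\<beta> * (1 - i j t) * (\<Sum>k=1..N. A j k * i k t) + u j t * (1 - i j t)))
       (at t within {0..T})"
    \<comment> \<open>adjoint equations\<close>
    and lam_ode: "\<forall>j\<in>{1..N}. \<forall>t\<in>{0..T}.
       (lam j has_real_derivative
          (- \<beta> * (\<Sum>l=1..N. lam l t * (1 - i l t) * A l j)
           + \<beta> * lam j t * (\<Sum>k=1..N. A j k * i k t) + lam j t * u j t))
       (at t within {0..T})"
    and lam_final: "\<forall>j\<in>{1..N}. lam j T = 1 / real N"
    \<comment> \<open>optimal controls: nonnegative, maximize the Hamiltonian\<close>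
    and u_nonneg: "\<forall>j\<in>{1..N}. \<forall>t\<in>{0..T}. u j t \<ge> 0"
    and H_max: "\<forall>t\<in>{0..T}. \<forall>v :: nat \<Rightarrow> real.
       hamiltonian N A \<beta> g (\<lambda>l. i l t) (\<lambda>l. lam l t) v
         \<le> hamiltonian N A \<beta> g (\<lambda>l. i l t) (\<lambda>l. lam l t) (\<lambda>l. u l t)"
    and u_stationary: "\<forall>j\<in>{1..N}. \<forall>t\<in>{0..T}. deriv (g j) (u j t) = lam j t * (1 - i j t)"
  shows "\<forall>j\<in>{1..N}. \<forall>t1\<in>{0..T}. \<forall>t2\<in>{0..T}. t1 \<le> t2 \<longrightarrow> u j t2 \<le> u j t1"
proof (intro ballI impI)
  \<comment> \<open>The maximisation condition, terminal value and initial data are not needed: stationarity suffices.\<close>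
  fix j t1 t2
  assume j: "j \<in> {1..N}" and t12: "t1 \<in> {0..T}" "t2 \<in> {0..T}" "t1 \<le> t2"
  define P where "P t = (\<Sum>l=1..N. lam l t * (1 - i l t) * A l j)" for t
  have P_nonneg: "0 \<le> P t" if "t \<in> {0..T}" for t
    unfolding P_def
  proof (rule sum_nonneg)
    fix l assume l: "l \<in> {1..N}"
    then have "0 \<le> lam l t * (1 - i l t)"
      using strictly_convex_even_deriv_nonneg[of "g l" "u l t"]
        g_conv g_diff g_even u_nonneg u_stationary that by metis
    moreover have "A l j = 0 \<or> A l j = 1" using A_01 l j by blast
    then have "0 \<le> A l j" by auto
    ultimately show "0 \<le> lam l t * (1 - i l t) * A l j" by simp
  qed
  have "lam j t2 * (1 - i j t2) \<le> lam j t1 * (1 - i j t1)"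
  proof (rule has_real_derivative_nonpos_imp_antimono[OF _ _ t12])
    fix t assume t: "t \<in> {0..T}"
    show "((\<lambda>s. lam j s * (1 - i j s)) has_real_derivative - \<beta> * (1 - i j t) * P t)
        (at t within {0..T})"
      using adjoint_times_susceptible_derivative i_ode lam_ode j t unfolding P_def by blast
    show "- \<beta> * (1 - i j t) * P t \<le> 0"
      using beta_pos i_range j t P_nonneg[OF t] by simp
  qed
  then have "deriv (g j) (u j t2) \<le> deriv (g j) (u j t1)"
    using u_stationary j t12 by simp
  then show "u j t2 \<le> u j t1"
    using strictly_convex_on_UNIV_deriv_strict_mono g_conv g_diff j strict_mono_less_eq by metis
qed

end
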